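(* Let $H:\mathbb{R}^{2m}\to\mathbb{R}$ be smooth and let $\bar y\in\mathbb{R}^{2m}$ be such that $F'=SH_{yy}(\bar y)$ is invertible. Consider the scheme $$y_{n+1}-y_n=\theta_n\,S\,\bar\nabla_sH(y_n,y_{n+1}),\qquad \theta_n=2(F')^{-1}\tanh\frac{h_nF'}{2}.$$ This scheme preserves the energy exactly: $H(y_{n+1})=H(y_n)$.
   Context: Notation: - $y=(x,p)\in\mathbb{R}^{2m}$, $y_n=(x_n,p_n)$, and $h_n$ is the time step. - $S=\begin{pmatrix}0&1\\-1&0\end{pmatrix}$ with $m\times m$ blocks. - $H_{yy}$ is the Hessian of $H$, so $F'=\begin{pmatrix}H_{px}&H_{pp}\\ -H_{xx}&-H_{xp}\end{pmatrix}$ at $\bar y$. $\bar\nabla_sH(y_n,y_{n+1})=\tfrac12\big(\bar\nabla H(y_n,y_{n+1})+\bar\nabla H(y_{n+1},y_n)\big)$ is the symmetrized coordinate increment discrete gradient, where $\bar\nabla H$ has components $$\frac{\Delta H}{\Delta y^j}=\frac{H(\hat y^j_n)-H(\hat y^{j-1}_n)}{y^j_{n+1}-y^j_n},\qquad \hat y^j_n=(y^1_{n+1},\dots,y^j_{n+1},y^{j+1}_n,\dots,y^{2m}_n),$$ with the partial derivative as limit when $y^j_{n+1}=y^j_n$. *)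

theory Defs
  imports "HOL-Analysis.Analysis"
begin

text \<open>Phase space R^{2m} is modelled as real^('m bit0): the index type 'm bit0 has
  exactly 2m elements, linearly ordered via Rep_bit0 into {0..<2m}. Indices with
  Rep_bit0 i < m are the x-coordinates, the others the p-coordinates.\<close>

text \<open>The symplectic matrix S = [[0, 1], [-1, 0]] with m x m blocks.\<close>
definition symp_S :: "real^('m::finite bit0)^('m bit0)" where
  "symp_S = (\<chi> i j. let m = int CARD('m) in
      if Rep_bit0 i < m \<and> Rep_bit0 j = Rep_bit0 i + m then 1
      else if m \<le> Rep_bit0 i \<and> Rep_bit0 j = Rep_bit0 i - m then -1
      else 0)"

definition partial :: "(real^'n::finite \<Rightarrow> real) \<Rightarrow> 'n \<Rightarrow> real^'n \<Rightarrow> real" where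
  "partial f j x = deriv (\<lambda>t. f (x + t *\<^sub>R axis j 1)) 0"

text \<open>Smoothness (C-infinity): f is continuous and every partial derivative exists
  everywhere and is again smooth (coinductively: continuous partials of all orders).\<close>
coinductive smooth_fun :: "(real^'n::finite \<Rightarrow> real) \<Rightarrow> bool" where
  "continuous_on UNIV f \<Longrightarrow>
   (\<And>j. (\<forall>x. (\<lambda>t. f (x + t *\<^sub>R axis j 1)) differentiable (at 0)) \<and>
         smooth_fun (partial f j)) \<Longrightarrow> smooth_fun f"

definition hessian :: "(real^'n::finite \<Rightarrow> real) \<Rightarrow> real^'n \<Rightarrow> real^'n^'n" where
  "hessian f x = (\<chi> i j. partial (partial f j) i x)"

fun mat_pow :: "real^'n::finite^'n \<Rightarrow> nat \<Rightarrow> real^'n^'n" where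
  "mat_pow A 0 = mat 1"
| "mat_pow A (Suc k) = A ** mat_pow A k"

definition mat_exp :: "real^'n::finite^'n \<Rightarrow> real^'n^'n" where
  "mat_exp A = (\<Sum>k. (1 / fact k) *\<^sub>R mat_pow A k)"

definition mat_tanh :: "real^'n::finite^'n \<Rightarrow> real^'n^'n" where
  "mat_tanh A = (mat_exp A - mat_exp (- A)) ** matrix_inv (mat_exp A + mat_exp (- A))"

text \<open>Coordinate increment discrete gradient (Itoh-Abe), coordinates ordered by the
  linear order of the index type.\<close>
definition hat_le :: "(real, 'n::{finite,linorder}) vec \<Rightarrow> (real, 'n) vec \<Rightarrow> 'n \<Rightarrow> (real, 'n) vec" where
  "hat_le y0 y1 j = (\<chi> i. if i \<le> j then y1 $ i else y0 $ i)"

definition hat_lt :: "(real, 'n::{finite,linorder}) vec \<Rightarrow> (real, 'n) vec \<Rightarrow> 'n \<Rightarrow> (real, 'n) vec" where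
  "hat_lt y0 y1 j = (\<chi> i. if i < j then y1 $ i else y0 $ i)"

definition coord_dgrad :: "((real, 'n::{finite,linorder}) vec \<Rightarrow> real) \<Rightarrow> (real, 'n) vec \<Rightarrow> (real, 'n) vec \<Rightarrow> (real, 'n) vec" where
  "coord_dgrad H y0 y1 = (\<chi> j.
     if y1 $ j \<noteq> y0 $ j
     then (H (hat_le y0 y1 j) - H (hat_lt y0 y1 j)) / (y1 $ j - y0 $ j)
     else partial H j (hat_lt y0 y1 j))"

definition sym_dgrad :: "((real, 'n::{finite,linorder}) vec \<Rightarrow> real) \<Rightarrow> (real, 'n) vec \<Rightarrow> (real, 'n) vec \<Rightarrow> (real, 'n) vec" where
  "sym_dgrad H y0 y1 = (1/2) *\<^sub>R (coord_dgrad H y0 y1 + coord_dgrad H y1 y0)"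

end

theory Submission
  imports Defs
begin

text \<open>Energy conservation rests on two facts. First, the coordinate increment discrete
  gradient satisfies the discrete chain rule \<nabla>H(y0,y1) \<bullet> (y1 - y0) = H y1 - H y0, since the
  sum telescopes over the intermediate points; symmetrization preserves this. Second, \<theta>S is
  skew-symmetric, so the increment y1 - y0 = \<theta>S g is orthogonal to the symmetrized
  gradient g. For the latter, X \<mapsto> -S X^T S is an anti-automorphism of the matrix algebra
  (as S^2 = -1) that commutes with inversion and with the exponential series. By symmetry of
  the Hessian it maps F = S H_yy to -F, hence swaps exp(hF/2) and exp(-hF/2) and fixes
  \<theta> = 2 F\<inverse> tanh(hF/2), all factors being functions of F. Matrices X fixed by it are
  exactly those with X S skew-symmetric.\<close>

lemma matrix_add_rdistrib:
  fixes A B :: "'a::semiring_1^'n^'m"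
  shows "(A + B) ** C = A ** C + B ** C"
  by (simp add: vec_eq_iff matrix_matrix_mult_def sum.distrib distrib_right)

lemma matrix_diff_ldistrib:
  fixes A :: "'a::ring_1^'n^'m"
  shows "A ** (B - C) = A ** B - A ** C"
  by (simp add: vec_eq_iff matrix_matrix_mult_def sum_subtractf right_diff_distrib)

lemma matrix_diff_rdistrib:
  fixes A B :: "'a::ring_1^'n^'m"
  shows "(A - B) ** C = A ** C - B ** C"
  by (simp add: vec_eq_iff matrix_matrix_mult_def sum_subtractf left_diff_distrib)

lemma matrix_mul_uminus_left:
  fixes A :: "'a::ring_1^'n^'m"
  shows "(- A) ** B = - (A ** B)"
  by (simp add: vec_eq_iff matrix_matrix_mult_def sum_negf)

lemma matrix_mul_uminus_right:
  fixes A :: "'a::ring_1^'n^'m"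
  shows "A ** (- B) = - (A ** B)"
  by (simp add: vec_eq_iff matrix_matrix_mult_def sum_negf)

lemma transpose_add: "transpose (A + B) = transpose A + transpose (B :: 'a::plus^'n^'m)"
  by (simp add: vec_eq_iff transpose_def)

lemma linear_matrix_mult_left: "linear (\<lambda>M :: real^'p^'n. (F :: real^'n^'m) ** M)"
  by (rule linearI) (simp_all add: matrix_add_ldistrib matrix_scalar_ac scalar_matrix_assoc)

lemma linear_matrix_mult_right: "linear (\<lambda>M :: real^'n^'m. M ** (F :: real^'p^'n))"
  by (rule linearI) (simp_all add: matrix_add_rdistrib scalar_matrix_assoc)

lemma
  fixes A :: "real^'n::finite^'n"
  assumes "invertible A"
  shows matrix_inv_right: "A ** matrix_inv A = mat 1"
    and matrix_inv_left: "matrix_inv A ** A = mat 1"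
proof -
  have "\<exists>A'. A ** A' = mat 1 \<and> A' ** A = mat 1"
    using assms invertible_def by blast
  then have "A ** matrix_inv A = mat 1 \<and> matrix_inv A ** A = mat 1"
    unfolding matrix_inv_def by (rule someI_ex)
  then show "A ** matrix_inv A = mat 1" "matrix_inv A ** A = mat 1" by auto
qed

lemma matrix_inv_unique:
  fixes A :: "real^'n::finite^'n"
  assumes "A ** B = mat 1"
  shows "matrix_inv A = B"
proof -
  have A: "invertible A"
    using assms invertible_right_inverse by blast
  have "matrix_inv A = (matrix_inv A ** A) ** B"
    by (metis assms matrix_mul_assoc matrix_mul_rid)
  then show ?thesis
    by (simp add: matrix_inv_left[OF A])
qed

lemma matrix_inv_uminus:
  fixes A :: "real^'n::finite^'n"
  assumes "invertible A"
  shows "matrix_inv (- A) = - matrix_inv A"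
  by (rule matrix_inv_unique)
    (simp add: matrix_mul_uminus_left matrix_mul_uminus_right matrix_inv_right[OF assms])

lemma matrix_inv_commute:
  fixes A B :: "real^'n::finite^'n"
  assumes B: "invertible B" and AB: "A ** B = B ** A"
  shows "matrix_inv B ** A = A ** matrix_inv B"
proof -
  have "matrix_inv B ** A = matrix_inv B ** (A ** B) ** matrix_inv B"
    by (simp add: matrix_mul_assoc[symmetric] matrix_inv_right[OF B])
  also have "\<dots> = (matrix_inv B ** B) ** A ** matrix_inv B"
    by (simp add: AB matrix_mul_assoc)
  finally show ?thesis
    by (simp add: matrix_inv_left[OF B])
qed

lemma mat_pow_commute: "F ** A = A ** F \<Longrightarrow> F ** mat_pow A k = mat_pow A k ** F"
  by (induction k) (simp_all add: matrix_mul_assoc, metis matrix_mul_assoc)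

lemma mat_pow_entry_bound:
  "\<bar>mat_pow (A :: real^'n::finite^'n) k $ i $ j\<bar> \<le> (\<Sum>a\<in>UNIV. \<Sum>b\<in>UNIV. \<bar>A $ a $ b\<bar>) ^ k"
proof (induction k arbitrary: i j)
  case 0
  show ?case by (simp add: mat_def)
next
  case (Suc k)
  let ?c = "\<Sum>a\<in>UNIV. \<Sum>b\<in>UNIV. \<bar>A $ a $ b\<bar>"
  have "\<bar>mat_pow A (Suc k) $ i $ j\<bar> = \<bar>\<Sum>l\<in>UNIV. A $ i $ l * mat_pow A k $ l $ j\<bar>"
    by (simp add: matrix_matrix_mult_def)
  also have "\<dots> \<le> (\<Sum>l\<in>UNIV. \<bar>A $ i $ l\<bar>) * ?c ^ k"
    unfolding sum_distrib_right
    by (rule order_trans[OF sum_abs], rule sum_mono) (simp add: abs_mult Suc mult_left_mono)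
  also have "\<dots> \<le> ?c * ?c ^ k"
    by (rule mult_right_mono, rule member_le_sum[of i UNIV "\<lambda>a. \<Sum>b\<in>UNIV. \<bar>A $ a $ b\<bar>"])
      (auto simp: sum_nonneg)
  finally show ?case by simp
qed

lemma summable_vecI:
  assumes "\<And>i. summable (\<lambda>k. f k $ i)"
  shows "summable (f :: nat \<Rightarrow> 'a::real_normed_vector^'n::finite)"
proof -
  have "(\<lambda>n. \<Sum>k<n. f k) \<longlonglongrightarrow> (\<chi> i. \<Sum>k. f k $ i)"
    by (rule vec_tendstoI) (simp add: assms summable_LIMSEQ)
  then show ?thesis
    unfolding summable_def sums_def by blast
qed

lemma summable_mat_exp_series:
  "summable (\<lambda>k. (1 / fact k) *\<^sub>R mat_pow (A :: real^'n::finite^'n) k)"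
proof (intro summable_vecI)
  fix i j
  let ?c = "\<Sum>a\<in>UNIV. \<Sum>b\<in>UNIV. \<bar>A $ a $ b\<bar>"
  show "summable (\<lambda>k. ((1 / fact k) *\<^sub>R mat_pow A k) $ i $ j)"
  proof (rule summable_comparison_test'[OF summable_exp[of ?c]])
    fix k :: nat
    show "norm (((1 / fact k) *\<^sub>R mat_pow A k) $ i $ j) \<le> inverse (fact k) * ?c ^ k"
      using mat_pow_entry_bound[of A k i j] by (simp add: divide_right_mono field_simps)
  qed
qed

lemma linear_mat_exp:
  fixes L :: "real^'n::finite^'n \<Rightarrow> 'b::real_normed_vector"
  assumes "linear L"
  shows "L (mat_exp A) = (\<Sum>k. (1 / fact k) *\<^sub>R L (mat_pow A k))"
proof -
  have "bounded_linear L"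
    using assms linear_conv_bounded_linear by blast
  then have "L (mat_exp A) = (\<Sum>k. L ((1 / fact k) *\<^sub>R mat_pow A k))"
    unfolding mat_exp_def using bounded_linear.suminf summable_mat_exp_series by blast
  then show ?thesis
    using assms by (simp add: linear_scale)
qed

lemma mat_exp_commute:
  fixes A F :: "real^'n::finite^'n"
  assumes "F ** A = A ** F"
  shows "F ** mat_exp A = mat_exp A ** F"
  using linear_mat_exp[OF linear_matrix_mult_left[of F], of A]
    linear_mat_exp[OF linear_matrix_mult_right[of F], of A]
  by (simp add: mat_pow_commute[OF assms])

definition symp_partner :: "'m::finite bit0 \<Rightarrow> 'm bit0" where
  "symp_partner i = Abs_bit0 (if Rep_bit0 i < int CARD('m)
     then Rep_bit0 i + int CARD('m) else Rep_bit0 i - int CARD('m))"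

definition symp_sign :: "'m::finite bit0 \<Rightarrow> real" where
  "symp_sign i = (if Rep_bit0 i < int CARD('m) then 1 else -1)"

lemma Rep_bit0_range: "0 \<le> Rep_bit0 (i :: 'm::finite bit0) \<and> Rep_bit0 i < 2 * int CARD('m)"
  using Rep_bit0[of i] by auto

lemma Rep_symp_partner:
  "Rep_bit0 (symp_partner (i :: 'm::finite bit0)) = (if Rep_bit0 i < int CARD('m)
     then Rep_bit0 i + int CARD('m) else Rep_bit0 i - int CARD('m))"
  unfolding symp_partner_def using Rep_bit0_range[of i] by (intro Abs_bit0_inverse) auto

lemma symp_partner_partner [simp]: "symp_partner (symp_partner i) = (i :: 'm::finite bit0)"
  using Rep_bit0_range[of i] by (intro Rep_bit0_inject[THEN iffD1]) (simp add: Rep_symp_partner)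

lemma symp_sign_partner [simp]: "symp_sign (symp_partner i) = - symp_sign (i :: 'm::finite bit0)"
  using Rep_bit0_range[of i] by (simp add: symp_sign_def Rep_symp_partner)

lemma symp_sign_square [simp]: "symp_sign i * symp_sign i = 1"
  by (simp add: symp_sign_def)

lemma symp_S_entry: "symp_S $ i $ j = (if j = symp_partner i then symp_sign i else 0)"
proof -
  have "j = symp_partner i \<longleftrightarrow> Rep_bit0 j = Rep_bit0 (symp_partner i)"
    by (simp add: Rep_bit0_inject)
  then show ?thesis
    using Rep_bit0_range[of i] by (auto simp: symp_S_def symp_sign_def Rep_symp_partner)
qed

lemma symp_S_squared: "(symp_S :: real^('m::finite bit0)^('m bit0)) ** symp_S = - mat 1"
proof -
  have "(symp_S ** symp_S) $ i $ k = - mat 1 $ i $ k" for i k :: "'m bit0"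
  proof -
    have "(symp_S ** symp_S) $ i $ k
        = (\<Sum>j\<in>UNIV. if j = symp_partner i then symp_sign i * symp_S $ j $ k else 0)"
      unfolding matrix_matrix_mult_def vec_lambda_beta symp_S_entry[of i] by (intro sum.cong) auto
    also have "\<dots> = symp_sign i * symp_S $ symp_partner i $ k"
      by simp
    also have "\<dots> = - mat 1 $ i $ k"
      by (simp add: symp_S_entry mat_def)
    finally show ?thesis .
  qed
  then show ?thesis by (simp add: vec_eq_iff)
qed

lemma transpose_symp_S: "transpose (symp_S :: real^('m::finite bit0)^('m bit0)) = - symp_S"
proof -
  have "transpose symp_S $ i $ j = (- symp_S) $ i $ j" for i j :: "'m bit0"
  proof (cases "j = symp_partner i")
    case True
    then show ?thesis by (simp add: transpose_def symp_S_entry)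
  next
    case False
    then have "i \<noteq> symp_partner j" by auto
    with False show ?thesis by (simp add: transpose_def symp_S_entry)
  qed
  then show ?thesis by (simp add: vec_eq_iff)
qed

text \<open>The adjoint with respect to the symplectic form (u, v) \<mapsto> u \<bullet> (S *v v),
  using S\<inverse> = -S.\<close>
definition symp_adj :: "real^'n::finite^'n \<Rightarrow> real^'n^'n \<Rightarrow> real^'n^'n" where
  "symp_adj S X = - (S ** transpose X ** S)"

locale symplectic_structure =
  fixes S :: "real^'n::finite^'n"
  assumes S_squared: "S ** S = - mat 1"
    and transpose_S: "transpose S = - S"
begin

lemma symp_adj_mult: "symp_adj S (X ** Y) = symp_adj S Y ** symp_adj S X"
proof -
  have "symp_adj S Y ** symp_adj S X = S ** transpose Y ** (S ** S) ** transpose X ** S"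
    by (simp add: symp_adj_def matrix_mul_uminus_left matrix_mul_uminus_right matrix_mul_assoc)
  also have "\<dots> = - (S ** (transpose Y ** transpose X) ** S)"
    by (simp add: S_squared matrix_mul_uminus_left matrix_mul_uminus_right matrix_mul_assoc)
  finally show ?thesis
    by (simp add: symp_adj_def matrix_transpose_mul)
qed

lemma symp_adj_one: "symp_adj S (mat 1) = mat 1"
  by (simp add: symp_adj_def S_squared)

lemma linear_symp_adj: "linear (symp_adj S)"
  by (rule linearI)
    (simp_all add: symp_adj_def transpose_add transpose_scalar matrix_add_ldistrib
      matrix_add_rdistrib matrix_scalar_ac scalar_matrix_assoc)

lemma symp_adj_mat_pow: "symp_adj S (mat_pow X k) = mat_pow (symp_adj S X) k"
  by (induction k) (simp_all add: symp_adj_one symp_adj_mult mat_pow_commute)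

lemma symp_adj_mat_exp: "symp_adj S (mat_exp X) = mat_exp (symp_adj S X)"
  using linear_mat_exp[OF linear_symp_adj, of X] by (simp add: symp_adj_mat_pow mat_exp_def)

lemma symp_adj_matrix_inv:
  assumes "invertible X"
  shows "symp_adj S (matrix_inv X) = matrix_inv (symp_adj S X)"
proof (rule matrix_inv_unique[symmetric])
  show "symp_adj S X ** symp_adj S (matrix_inv X) = mat 1"
    by (simp add: symp_adj_mult[symmetric] matrix_inv_left[OF assms] symp_adj_one)
qed

lemma symp_adj_S_mult_symmetric:
  assumes "transpose A = A"
  shows "symp_adj S (S ** A) = - (S ** A)"
proof -
  have "symp_adj S (S ** A) = - (S ** (A ** (- S)) ** S)"
    by (simp add: symp_adj_def matrix_transpose_mul assms transpose_S)
  also have "\<dots> = - (S ** A)"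
    by (simp add: matrix_mul_uminus_left matrix_mul_uminus_right matrix_mul_assoc[symmetric]
        S_squared)
  finally show ?thesis .
qed

lemma skew_mult_S_if_symp_adj_fixed:
  assumes "symp_adj S X = X"
  shows "transpose (X ** S) = - (X ** S)"
proof -
  have "- (S ** transpose X ** S) ** S = X ** S"
    using assms by (simp add: symp_adj_def)
  then have "S ** transpose X = X ** S"
    by (simp add: matrix_mul_uminus_left matrix_mul_uminus_right matrix_mul_assoc[symmetric]
        S_squared)
  then show ?thesis
    by (simp add: matrix_transpose_mul transpose_S matrix_mul_uminus_left)
qed

lemma symp_adj_fixed_product:
  assumes F: "invertible F" and P: "invertible P"
    and FD: "F ** D = D ** F" and FP: "F ** P = P ** F" and DP: "D ** P = P ** D"
    and adj_F: "symp_adj S F = - F" and adj_D: "symp_adj S D = - D"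
    and adj_P: "symp_adj S P = P"
  shows "symp_adj S (matrix_inv F ** D ** matrix_inv P) = matrix_inv F ** D ** matrix_inv P"
proof -
  have adj_inv_F: "symp_adj S (matrix_inv F) = - matrix_inv F"
    by (simp add: symp_adj_matrix_inv F adj_F matrix_inv_uminus)
  have "symp_adj S (matrix_inv F ** D ** matrix_inv P) = matrix_inv P ** D ** matrix_inv F"
    by (simp add: symp_adj_mult symp_adj_matrix_inv P adj_P adj_D adj_inv_F
        matrix_mul_uminus_left matrix_mul_uminus_right matrix_mul_assoc)
  also have "\<dots> = matrix_inv F ** D ** matrix_inv P"
    using matrix_inv_commute[OF P DP] matrix_inv_commute[OF F FD[symmetric]]
      matrix_inv_commute[OF P matrix_inv_commute[OF F FP[symmetric]]]
    by (metis matrix_mul_assoc)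
  finally show ?thesis .
qed

lemma skew_matrix_inv_tanh_mult_S:
  assumes adj_F: "symp_adj S F = - F" and F: "invertible F"
    and P: "invertible (mat_exp (c *\<^sub>R F) + mat_exp (- (c *\<^sub>R F)))"
  shows "transpose (matrix_inv F ** mat_tanh (c *\<^sub>R F) ** S)
    = - (matrix_inv F ** mat_tanh (c *\<^sub>R F) ** S)"
proof -
  define E where "E = mat_exp (c *\<^sub>R F)"
  define E' where "E' = mat_exp (- (c *\<^sub>R F))"
  have adj_E: "symp_adj S E = E'" and adj_E': "symp_adj S E' = E"
    using linear_symp_adj
    by (simp_all add: E_def E'_def symp_adj_mat_exp adj_F linear_scale linear_neg)
  have "F ** (c *\<^sub>R F) = (c *\<^sub>R F) ** F" "F ** (- (c *\<^sub>R F)) = (- (c *\<^sub>R F)) ** F"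
    "(- (c *\<^sub>R F)) ** E = E ** (- (c *\<^sub>R F))"
    by (simp_all add: matrix_scalar_ac scalar_matrix_assoc matrix_mul_uminus_left
        matrix_mul_uminus_right E_def mat_exp_commute)
  then have FE: "F ** E = E ** F" and FE': "F ** E' = E' ** F" and EE': "E ** E' = E' ** E"
    by (simp_all add: E_def E'_def mat_exp_commute)
  have "symp_adj S (matrix_inv F ** (E - E') ** matrix_inv (E + E'))
      = matrix_inv F ** (E - E') ** matrix_inv (E + E')"
    using linear_symp_adj P[folded E_def E'_def]
    by (intro symp_adj_fixed_product)
      (simp_all add: F adj_F adj_E adj_E' linear_add linear_diff matrix_add_ldistrib
        matrix_add_rdistrib matrix_diff_ldistrib matrix_diff_rdistrib FE FE' EE' add.commute)
  then show ?thesis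
    by (simp add: mat_tanh_def E_def E'_def matrix_mul_assoc skew_mult_S_if_symp_adj_fixed)
qed

end

definition coord_mix :: "(real, 'n::finite) vec \<Rightarrow> (real, 'n) vec \<Rightarrow> 'n set \<Rightarrow> (real, 'n) vec" where
  "coord_mix y0 y1 A = (\<chi> i. if i \<in> A then y1 $ i else y0 $ i)"

lemma sum_coord_mix_telescope:
  fixes H :: "(real, 'n::{finite,linorder}) vec \<Rightarrow> real"
  assumes "finite A"
  shows "(\<Sum>j\<in>A. H (coord_mix y0 y1 (A \<inter> {..j})) - H (coord_mix y0 y1 (A \<inter> {..<j})))
    = H (coord_mix y0 y1 A) - H (coord_mix y0 y1 {})"
  using assms
proof (induction A rule: finite_linorder_max_induct)
  case empty
  show ?case by simp
next
  case (insert b A)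
  have "(\<Sum>j\<in>A. H (coord_mix y0 y1 (insert b A \<inter> {..j})) - H (coord_mix y0 y1 (insert b A \<inter> {..<j})))
      = (\<Sum>j\<in>A. H (coord_mix y0 y1 (A \<inter> {..j})) - H (coord_mix y0 y1 (A \<inter> {..<j})))"
  proof (rule sum.cong)
    fix j
    assume "j \<in> A"
    then have "insert b A \<inter> {..j} = A \<inter> {..j}" "insert b A \<inter> {..<j} = A \<inter> {..<j}"
      using insert.hyps(2) by auto
    then show "H (coord_mix y0 y1 (insert b A \<inter> {..j})) - H (coord_mix y0 y1 (insert b A \<inter> {..<j}))
        = H (coord_mix y0 y1 (A \<inter> {..j})) - H (coord_mix y0 y1 (A \<inter> {..<j}))"
      by simp
  qed simp
  moreover have "insert b A \<inter> {..b} = insert b A" "insert b A \<inter> {..<b} = A" "b \<notin> A"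
    using insert.hyps(2) by auto
  ultimately show ?case
    using insert by simp
qed

lemma sum_hat_telescope:
  fixes H :: "(real, 'n::{finite,linorder}) vec \<Rightarrow> real"
  shows "(\<Sum>j\<in>UNIV. H (hat_le y0 y1 j) - H (hat_lt y0 y1 j)) = H y1 - H y0"
proof -
  have "hat_le y0 y1 j = coord_mix y0 y1 (UNIV \<inter> {..j})"
    and "hat_lt y0 y1 j = coord_mix y0 y1 (UNIV \<inter> {..<j})" for j
    by (simp_all add: hat_le_def hat_lt_def coord_mix_def)
  moreover have "coord_mix y0 y1 UNIV = y1" "coord_mix y0 y1 {} = y0"
    by (simp_all add: coord_mix_def vec_eq_iff)
  ultimately show ?thesis
    using sum_coord_mix_telescope[of UNIV H y0 y1] by simp
qed

lemma coord_dgrad_chain_rule: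
  fixes H :: "(real, 'n::{finite,linorder}) vec \<Rightarrow> real"
  shows "coord_dgrad H y0 y1 \<bullet> (y1 - y0) = H y1 - H y0"
proof -
  have "coord_dgrad H y0 y1 $ j * (y1 - y0) $ j = H (hat_le y0 y1 j) - H (hat_lt y0 y1 j)" for j
  proof (cases "y1 $ j = y0 $ j")
    case True
    then have "hat_le y0 y1 j = hat_lt y0 y1 j"
      by (auto simp: hat_le_def hat_lt_def vec_eq_iff)
    with True show ?thesis by simp
  next
    case False
    then show ?thesis by (simp add: coord_dgrad_def)
  qed
  then show ?thesis
    by (simp add: inner_vec_def sum_hat_telescope)
qed

lemma sym_dgrad_chain_rule:
  fixes H :: "(real, 'n::{finite,linorder}) vec \<Rightarrow> real"
  shows "sym_dgrad H y0 y1 \<bullet> (y1 - y0) = H y1 - H y0"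
proof -
  have "coord_dgrad H y1 y0 \<bullet> (y1 - y0) = - (coord_dgrad H y1 y0 \<bullet> (y0 - y1))"
    by (simp add: inner_diff_right)
  then show ?thesis
    by (simp add: sym_dgrad_def inner_add_left coord_dgrad_chain_rule)
qed

lemma smooth_fun_continuous: "smooth_fun f \<Longrightarrow> continuous_on UNIV f"
  by (erule smooth_fun.cases) simp

lemma smooth_fun_directionally_differentiable:
  "smooth_fun f \<Longrightarrow> (\<lambda>t. f (x + t *\<^sub>R axis j 1)) differentiable (at 0)"
  by (erule smooth_fun.cases) blast

lemma smooth_fun_partial: "smooth_fun f \<Longrightarrow> smooth_fun (partial f j)"
  by (erule smooth_fun.cases) blast

lemma smooth_fun_has_partial_derivative:
  assumes "smooth_fun (f :: real^'n::finite \<Rightarrow> real)"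
  shows "((\<lambda>t. f (y + t *\<^sub>R axis j 1)) has_real_derivative partial f j (y + t0 *\<^sub>R axis j 1)) (at t0)"
proof -
  let ?z = "y + t0 *\<^sub>R axis j 1"
  have "((\<lambda>t. f (?z + t *\<^sub>R axis j 1)) has_real_derivative partial f j ?z) (at 0)"
    using smooth_fun_directionally_differentiable[OF assms, of ?z j] unfolding partial_def
    by (simp add: DERIV_deriv_iff_real_differentiable)
  moreover have "(\<lambda>t. f (?z + t *\<^sub>R axis j 1)) = (\<lambda>t. f (y + (t + t0) *\<^sub>R axis j 1))"
    by (simp add: algebra_simps scaleR_add_left)
  ultimately show ?thesis
    using DERIV_shift[of "\<lambda>t. f (y + t *\<^sub>R axis j 1)" "partial f j ?z" 0 t0] by simp
qed

lemma DERIV_mean_value_origin: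
  assumes "\<And>t. (\<phi> has_real_derivative \<phi>' t) (at t)"
  shows "\<exists>\<sigma>. \<bar>\<sigma>\<bar> \<le> \<bar>s\<bar> \<and> \<phi> s - \<phi> 0 = s * \<phi>' \<sigma>"
proof (cases s "0 :: real" rule: linorder_cases)
  case less
  from MVT2[OF this, of \<phi> \<phi>'] assms obtain z where "s < z" "z < 0" "\<phi> 0 - \<phi> s = (0 - s) * \<phi>' z"
    by blast
  then show ?thesis by (intro exI[of _ z]) (auto simp: algebra_simps)
next
  case greater
  from MVT2[OF this, of \<phi> \<phi>'] assms obtain z where "0 < z" "z < s" "\<phi> s - \<phi> 0 = (s - 0) * \<phi>' z"
    by blast
  then show ?thesis by (intro exI[of _ z]) auto
qed auto

lemma second_difference_mean_value:
  assumes sm: "smooth_fun (f :: real^'n::finite \<Rightarrow> real)"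
  shows "\<exists>\<sigma> \<tau>. \<bar>\<sigma>\<bar> \<le> \<bar>s\<bar> \<and> \<bar>\<tau>\<bar> \<le> \<bar>s\<bar> \<and>
    f (x + s *\<^sub>R axis i 1 + s *\<^sub>R axis j 1) - f (x + s *\<^sub>R axis i 1) - f (x + s *\<^sub>R axis j 1) + f x
    = s * s * partial (partial f i) j (x + \<sigma> *\<^sub>R axis i 1 + \<tau> *\<^sub>R axis j 1)"
proof -
  let ?a = "axis i (1::real) :: real^'n" and ?b = "axis j (1::real) :: real^'n"
  define \<phi> where "\<phi> t = f ((x + s *\<^sub>R ?b) + t *\<^sub>R ?a) - f (x + t *\<^sub>R ?a)" for t
  define \<phi>' where "\<phi>' t = partial f i ((x + s *\<^sub>R ?b) + t *\<^sub>R ?a) - partial f i (x + t *\<^sub>R ?a)" for t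
  have "(\<phi> has_real_derivative \<phi>' t) (at t)" for t
    unfolding \<phi>_def \<phi>'_def by (intro DERIV_diff smooth_fun_has_partial_derivative[OF sm])
  then obtain \<sigma> where \<sigma>: "\<bar>\<sigma>\<bar> \<le> \<bar>s\<bar>" "\<phi> s - \<phi> 0 = s * \<phi>' \<sigma>"
    using DERIV_mean_value_origin by metis
  define \<psi> where "\<psi> u = partial f i ((x + \<sigma> *\<^sub>R ?a) + u *\<^sub>R ?b)" for u
  have d\<psi>: "(\<psi> has_real_derivative partial (partial f i) j ((x + \<sigma> *\<^sub>R ?a) + u *\<^sub>R ?b)) (at u)" for u
    unfolding \<psi>_def by (rule smooth_fun_has_partial_derivative[OF smooth_fun_partial[OF sm]])
  obtain \<tau> where \<tau>: "\<bar>\<tau>\<bar> \<le> \<bar>s\<bar>"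
    "\<psi> s - \<psi> 0 = s * partial (partial f i) j ((x + \<sigma> *\<^sub>R ?a) + \<tau> *\<^sub>R ?b)"
    using DERIV_mean_value_origin[OF d\<psi>] by blast
  have "\<phi>' \<sigma> = \<psi> s - \<psi> 0"
    unfolding \<phi>'_def \<psi>_def by (simp add: algebra_simps)
  moreover have "\<phi> s - \<phi> 0 = f (x + s *\<^sub>R ?a + s *\<^sub>R ?b) - f (x + s *\<^sub>R ?a) - f (x + s *\<^sub>R ?b) + f x"
    unfolding \<phi>_def by (simp add: algebra_simps)
  ultimately show ?thesis
    using \<sigma> \<tau> by (intro exI[of _ \<sigma>] exI[of _ \<tau>]) simp
qed

lemma dist_add_two_axes_less:
  fixes x :: "real^'n::finite"
  assumes "\<bar>a\<bar> \<le> s" "\<bar>b\<bar> \<le> s" "4 * s \<le> d" "0 < s"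
  shows "dist (x + a *\<^sub>R axis k 1 + b *\<^sub>R axis l 1) x < d"
proof -
  have "dist (x + a *\<^sub>R axis k 1 + b *\<^sub>R axis l 1) x = norm (a *\<^sub>R axis k (1::real) + b *\<^sub>R axis l 1)"
    by (simp add: dist_norm)
  also have "\<dots> \<le> \<bar>a\<bar> + \<bar>b\<bar>"
    using norm_triangle_ineq[of "a *\<^sub>R axis k (1::real)" "b *\<^sub>R axis l 1"] by simp
  also have "\<dots> < d"
    using assms by linarith
  finally show ?thesis .
qed

lemma partial_partial_commute:
  assumes sm: "smooth_fun (f :: real^'n::finite \<Rightarrow> real)"
  shows "partial (partial f i) j x = partial (partial f j) i x"
proof (rule ccontr)
  let ?p = "partial (partial f i) j" and ?q = "partial (partial f j) i"
  assume "?p x \<noteq> ?q x"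
  define e where "e = \<bar>?p x - ?q x\<bar> / 2"
  have "e > 0"
    using \<open>?p x \<noteq> ?q x\<close> by (simp add: e_def)
  have "continuous (at x) ?p" "continuous (at x) ?q"
    using smooth_fun_continuous[OF smooth_fun_partial[OF smooth_fun_partial[OF sm]]]
    by (simp_all add: continuous_on_eq_continuous_at)
  then obtain d1 d2 where d1: "d1 > 0" "\<And>z. dist z x < d1 \<Longrightarrow> dist (?p z) (?p x) < e"
    and d2: "d2 > 0" "\<And>z. dist z x < d2 \<Longrightarrow> dist (?q z) (?q x) < e"
    using \<open>e > 0\<close> unfolding continuous_at_eps_delta by metis
  define s where "s = min d1 d2 / 4"
  have "s > 0"
    using d1 d2 by (simp add: s_def)
  have swap: "x + s *\<^sub>R axis j 1 + s *\<^sub>R axis i 1 = x + s *\<^sub>R axis i 1 + s *\<^sub>R axis j (1::real)"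
    by (simp add: algebra_simps)
  obtain \<sigma> \<tau> where st: "\<bar>\<sigma>\<bar> \<le> \<bar>s\<bar>" "\<bar>\<tau>\<bar> \<le> \<bar>s\<bar>"
    "f (x + s *\<^sub>R axis i 1 + s *\<^sub>R axis j 1) - f (x + s *\<^sub>R axis i 1) - f (x + s *\<^sub>R axis j 1) + f x
    = s * s * ?p (x + \<sigma> *\<^sub>R axis i 1 + \<tau> *\<^sub>R axis j 1)"
    using second_difference_mean_value[OF sm, of s x i j] by blast
  obtain \<sigma>' \<tau>' where st': "\<bar>\<sigma>'\<bar> \<le> \<bar>s\<bar>" "\<bar>\<tau>'\<bar> \<le> \<bar>s\<bar>"
    "f (x + s *\<^sub>R axis i 1 + s *\<^sub>R axis j 1) - f (x + s *\<^sub>R axis j 1) - f (x + s *\<^sub>R axis i 1) + f x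
    = s * s * ?q (x + \<sigma>' *\<^sub>R axis j 1 + \<tau>' *\<^sub>R axis i 1)"
    using second_difference_mean_value[OF sm, of s x j i] unfolding swap by blast
  have "?p (x + \<sigma> *\<^sub>R axis i 1 + \<tau> *\<^sub>R axis j 1) = ?q (x + \<sigma>' *\<^sub>R axis j 1 + \<tau>' *\<^sub>R axis i 1)"
  proof -
    have "s * s * ?p (x + \<sigma> *\<^sub>R axis i 1 + \<tau> *\<^sub>R axis j 1)
        = s * s * ?q (x + \<sigma>' *\<^sub>R axis j 1 + \<tau>' *\<^sub>R axis i 1)"
      using st(3) st'(3) by linarith
    then show ?thesis
      using \<open>s > 0\<close> by simp
  qed
  moreover have "dist (?p (x + \<sigma> *\<^sub>R axis i 1 + \<tau> *\<^sub>R axis j 1)) (?p x) < e"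
    using st \<open>s > 0\<close> by (intro d1(2) dist_add_two_axes_less[where s = s]) (auto simp: s_def)
  moreover have "dist (?q (x + \<sigma>' *\<^sub>R axis j 1 + \<tau>' *\<^sub>R axis i 1)) (?q x) < e"
    using st' \<open>s > 0\<close> by (intro d2(2) dist_add_two_axes_less[where s = s]) (auto simp: s_def)
  ultimately have "\<bar>?p x - ?q x\<bar> < 2 * e"
    by (simp add: dist_real_def)
  then show False
    by (simp add: e_def)
qed

lemma hessian_symmetric: "smooth_fun f \<Longrightarrow> transpose (hessian f x) = hessian f x"
  by (simp add: vec_eq_iff transpose_def hessian_def partial_partial_commute)

lemma inner_skew_matrix_self:
  fixes M :: "real^'n::finite^'n"
  assumes "transpose M = - M"
  shows "v \<bullet> (M *v v) = 0"
proof -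
  have "transpose M *v v = - (M *v v)"
    using assms by (simp add: vec_eq_iff matrix_vector_mult_def sum_negf)
  then have "v \<bullet> (M *v v) = - (v \<bullet> (M *v v))"
    by (metis dot_lmul_matrix inner_commute inner_minus_left transpose_matrix_vector)
  then show ?thesis by simp
qed

theorem proposition6p9:
  fixes H :: "real^('m::finite bit0) \<Rightarrow> real"
    and ybar y0 y1 :: "real^('m bit0)"
    and h :: real
  assumes "smooth_fun H"
    and "invertible (symp_S ** hessian H ybar)"
    and "invertible (mat_exp ((h/2) *\<^sub>R (symp_S ** hessian H ybar))
                     + mat_exp (- ((h/2) *\<^sub>R (symp_S ** hessian H ybar))))"
    and "y1 - y0 = ((2::real) *\<^sub>R (matrix_inv (symp_S ** hessian H ybar)
                       ** mat_tanh ((h/2) *\<^sub>R (symp_S ** hessian H ybar))))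
                   *v (symp_S *v sym_dgrad H y0 y1)"
  shows "H y1 = H y0"
proof -
  interpret symplectic_structure "symp_S :: real^('m bit0)^('m bit0)"
    by unfold_locales (simp_all add: symp_S_squared transpose_symp_S)
  let ?F = "symp_S ** hessian H ybar"
  define M where "M = matrix_inv ?F ** mat_tanh ((h/2) *\<^sub>R ?F) ** symp_S"
  have "symp_adj symp_S ?F = - ?F"
    using symp_adj_S_mult_symmetric hessian_symmetric[OF assms(1)] by blast
  then have "transpose M = - M"
    unfolding M_def using assms(2,3) by (rule skew_matrix_inv_tanh_mult_S)
  moreover have "y1 - y0 = 2 *\<^sub>R (M *v sym_dgrad H y0 y1)"
    using assms(4) by (simp add: M_def matrix_vector_mul_assoc scalar_matrix_assoc[symmetric]
        scaleR_matrix_vector_assoc)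
  ultimately have "H y1 - H y0 = 0"
    by (simp add: sym_dgrad_chain_rule[symmetric] inner_skew_matrix_self)
  then show ?thesis by simp
qed

end
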